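(* Let $n\ge 1$ be a natural number and let $F$ be an $n$-perturbation on $H^2(\mathbb{D})$ (defined in the context), and put $S_n = M_z + F$. Then: (i) $F(z^m f) = 0$ for each $m \geq n$ and each $f \in H^2(\mathbb{D})$; (ii) for each $f \in H^2(\mathbb{D})$ and each $m \geq 1$ there exists a polynomial $p \in \mathbb{C}[z]$ (depending on $f$ and $m$) such that $S_n^m f = z^m (f + p)$; (iii) $S_n$ is a shift on some analytic Hilbert space, i.e. $S_n$ is unitarily equivalent to the multiplication operator $M_z$ on some analytic Hilbert space.
   Context: $H^2(\mathbb{D})$ is the Hardy space on the open unit disc $\mathbb{D}$ and $M_z$ is the unilateral shift (multiplication by $z$) on it. All operators are bounded linear operators. A linear operator $F$ on $H^2(\mathbb{D})$ is called an $n$-perturbation if (a) $Fz^m = 0$ for all $m \ge n$; (b) $F(z^m H^2(\mathbb{D})) \subseteq z^{m+1}\mathbb{C}[z]$ for all $m \ge 0$; and (c) $M_z + F$ is left-invertible. An analytic Hilbert space is a reproducing kernel Hilbert space $\mathcal{H}_k$ of $\mathcal{E}$-valued analytic functions on $\mathbb{D}$ (for some Hilbert space $\mathcal{E}$) associated with a positive definite kernel $k:\mathbb{D}\times\mathbb{D}\to\mathcal{B}(\mathcal{E})$ analytic in the first variable, on which the multiplication operator $(M_zf)(w)=wf(w)$ is bounded. *)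

theory Defs
  imports "HOL-Complex_Analysis.Complex_Analysis" "HOL-Computational_Algebra.Polynomial"
begin

text \<open>Functions on the open unit disc D are represented as total functions
  complex => complex that vanish outside D (so that equality of elements
  is equality on D).\<close>

definition onD :: "(complex \<Rightarrow> complex) \<Rightarrow> complex \<Rightarrow> complex" where
  "onD g = (\<lambda>w. if w \<in> ball 0 1 then g w else 0)"

definition disc_fun :: "(complex \<Rightarrow> complex) \<Rightarrow> bool" where
  "disc_fun f \<longleftrightarrow> f holomorphic_on ball 0 1 \<and> (\<forall>w. w \<notin> ball 0 1 \<longrightarrow> f w = 0)"

definition tcoeff :: "(complex \<Rightarrow> complex) \<Rightarrow> nat \<Rightarrow> complex" where
  "tcoeff f n = (deriv ^^ n) f 0 / fact n"

definition H2 :: "(complex \<Rightarrow> complex) set" where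
  "H2 = {f. disc_fun f \<and> summable (\<lambda>n. (norm (tcoeff f n))^2)}"

definition h2_inner :: "(complex \<Rightarrow> complex) \<Rightarrow> (complex \<Rightarrow> complex) \<Rightarrow> complex" where
  "h2_inner f g = (\<Sum>n. tcoeff f n * cnj (tcoeff g n))"

definition h2_norm :: "(complex \<Rightarrow> complex) \<Rightarrow> real" where
  "h2_norm f = sqrt (\<Sum>n. (norm (tcoeff f n))^2)"

definition Mz :: "(complex \<Rightarrow> complex) \<Rightarrow> complex \<Rightarrow> complex" where
  "Mz f = (\<lambda>w. w * f w)"

definition zpow :: "nat \<Rightarrow> complex \<Rightarrow> complex" where
  "zpow m = onD (\<lambda>w. w ^ m)"

definition bounded_op_H2 :: "((complex \<Rightarrow> complex) \<Rightarrow> (complex \<Rightarrow> complex)) \<Rightarrow> bool" where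
  "bounded_op_H2 T \<longleftrightarrow>
     (\<forall>f\<in>H2. T f \<in> H2) \<and>
     (\<forall>f\<in>H2. \<forall>g\<in>H2. T (\<lambda>w. f w + g w) = (\<lambda>w. T f w + T g w)) \<and>
     (\<forall>f\<in>H2. \<forall>c. T (\<lambda>w. c * f w) = (\<lambda>w. c * T f w)) \<and>
     (\<exists>C. \<forall>f\<in>H2. h2_norm (T f) \<le> C * h2_norm f)"

definition left_invertible_H2 :: "((complex \<Rightarrow> complex) \<Rightarrow> (complex \<Rightarrow> complex)) \<Rightarrow> bool" where
  "left_invertible_H2 T \<longleftrightarrow> (\<exists>L. bounded_op_H2 L \<and> (\<forall>f\<in>H2. L (T f) = f))"

definition n_perturbation :: "nat \<Rightarrow> ((complex \<Rightarrow> complex) \<Rightarrow> (complex \<Rightarrow> complex)) \<Rightarrow> bool" where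
  "n_perturbation n F \<longleftrightarrow>
     bounded_op_H2 F \<and>
     (\<forall>m\<ge>n. F (zpow m) = (\<lambda>w. 0)) \<and>
     (\<forall>m. \<forall>f\<in>H2. \<exists>p :: complex poly.
         F (\<lambda>w. w ^ m * f w) = onD (\<lambda>w. w ^ (m + 1) * poly p w)) \<and>
     left_invertible_H2 (\<lambda>f. (\<lambda>w. Mz f w + F f w))"

section \<open>Analytic Hilbert spaces (scalar-valued, E = C)\<close>

definition analytic_hilbert_space ::
  "(complex \<Rightarrow> complex) set \<Rightarrow> ((complex \<Rightarrow> complex) \<Rightarrow> (complex \<Rightarrow> complex) \<Rightarrow> complex)
    \<Rightarrow> (complex \<Rightarrow> complex \<Rightarrow> complex) \<Rightarrow> bool" where
  "analytic_hilbert_space H ip k \<longleftrightarrow>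
     \<comment> \<open>a linear space of analytic functions on D\<close>
     (\<forall>f\<in>H. disc_fun f) \<and>
     (\<lambda>w. 0) \<in> H \<and>
     (\<forall>f\<in>H. \<forall>g\<in>H. (\<lambda>w. f w + g w) \<in> H) \<and>
     (\<forall>f\<in>H. \<forall>c. (\<lambda>w. c * f w) \<in> H) \<and>
     \<comment> \<open>complex inner product\<close>
     (\<forall>f\<in>H. \<forall>g\<in>H. \<forall>h\<in>H. ip (\<lambda>w. f w + g w) h = ip f h + ip g h) \<and>
     (\<forall>f\<in>H. \<forall>g\<in>H. \<forall>c. ip (\<lambda>w. c * f w) g = c * ip f g) \<and>
     (\<forall>f\<in>H. \<forall>g\<in>H. ip g f = cnj (ip f g)) \<and>
     (\<forall>f\<in>H. Im (ip f f) = 0 \<and> Re (ip f f) \<ge> 0) \<and>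
     (\<forall>f\<in>H. ip f f = 0 \<longrightarrow> f = (\<lambda>w. 0)) \<and>
     \<comment> \<open>completeness w.r.t. the induced norm\<close>
     (\<forall>X. (\<forall>i. X i \<in> H) \<and>
          (\<forall>e>0. \<exists>N. \<forall>i\<ge>N. \<forall>j\<ge>N. sqrt (Re (ip (\<lambda>w. X i w - X j w) (\<lambda>w. X i w - X j w))) < e)
        \<longrightarrow> (\<exists>L\<in>H. (\<lambda>i. sqrt (Re (ip (\<lambda>w. X i w - L w) (\<lambda>w. X i w - L w)))) \<longlonglongrightarrow> 0)) \<and>
     \<comment> \<open>k is a positive definite kernel, analytic in the first variable, reproducing for H\<close>
     (\<forall>w\<in>ball 0 1. (\<lambda>z. k z w) holomorphic_on ball 0 1) \<and>
     (\<forall>zs c. set zs \<subseteq> ball 0 1 \<longrightarrow>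
        (let S = (\<Sum>i<length zs. \<Sum>j<length zs. c i * cnj (c j) * k (zs ! j) (zs ! i))
         in Im S = 0 \<and> Re S \<ge> 0)) \<and>
     (\<forall>w\<in>ball 0 1. onD (\<lambda>z. k z w) \<in> H \<and>
        (\<forall>f\<in>H. ip f (onD (\<lambda>z. k z w)) = f w)) \<and>
     \<comment> \<open>M_z is a bounded operator on H\<close>
     (\<forall>f\<in>H. Mz f \<in> H) \<and>
     (\<exists>C. \<forall>f\<in>H. sqrt (Re (ip (Mz f) (Mz f))) \<le> C * sqrt (Re (ip f f)))"

definition unitarily_equiv_Mz ::
  "((complex \<Rightarrow> complex) \<Rightarrow> (complex \<Rightarrow> complex)) \<Rightarrow> (complex \<Rightarrow> complex) set
    \<Rightarrow> ((complex \<Rightarrow> complex) \<Rightarrow> (complex \<Rightarrow> complex) \<Rightarrow> complex) \<Rightarrow> bool" where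
  "unitarily_equiv_Mz T H ip \<longleftrightarrow>
     (\<exists>U. (\<forall>f\<in>H2. U f \<in> H) \<and>
          (\<forall>f\<in>H2. \<forall>g\<in>H2. U (\<lambda>w. f w + g w) = (\<lambda>w. U f w + U g w)) \<and>
          (\<forall>f\<in>H2. \<forall>c. U (\<lambda>w. c * f w) = (\<lambda>w. c * U f w)) \<and>
          U ` H2 = H \<and>
          (\<forall>f\<in>H2. \<forall>g\<in>H2. ip (U f) (U g) = h2_inner f g) \<and>
          (\<forall>f\<in>H2. U (T f) = Mz (U f)))"

end

(*
  Write f = (sum of f_j z^j over j < k) + z^k h.  For m >= n, condition (a) kills the polynomial
  part of z^m f, and condition (b) sends z^(m+k) h into z^(m+k+1) C[z]; so the k-th Taylor
  coefficient of F (z^m f) vanishes for every k, which is (i), and (ii) follows by induction on m.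
  By (i), S acts as M_z on z^n H^2, so S^n f = z^n U f defines a linear map U with U S = M_z U,
  and U is injective because S is left-invertible.  Transporting the inner product of H^2 to the
  range of U makes U a unitary that turns S into M_z.  Since
  U f = f + (sum of f_j (U z^j - z^j) over j < n), evaluation at w on the range is the inner
  product with an explicit element of H^2, which gives the reproducing kernel.
*)
theory Submission
  imports Defs
begin

section \<open>Elements of H2 as power series\<close>

definition disc_series :: "(nat \<Rightarrow> complex) \<Rightarrow> (complex \<Rightarrow> complex) \<Rightarrow> bool" where
  "disc_series a f \<longleftrightarrow> (\<forall>w\<in>ball 0 1. (\<lambda>k. a k * w ^ k) sums f w)"

lemma tcoeff_disc_series:
  assumes "disc_series a f"
  shows "tcoeff f k = a k"
proof -
  have "(\<lambda>k. a k * (1/2::complex) ^ k) sums f (1/2)"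
    using assms unfolding disc_series_def by auto
  then have "conv_radius a \<ge> norm (1/2::complex)"
    by (intro conv_radius_geI) (auto simp: sums_iff)
  then have radius: "fps_conv_radius (Abs_fps a) > 0"
    unfolding fps_conv_radius_def
    by (auto simp: zero_ereal_def intro: less_le_trans[of _ "ereal (1/2)"])
  have "eventually (\<lambda>z. z \<in> ball (0::complex) 1) (nhds 0)"
    by (intro eventually_nhds_in_open) auto
  then have "eventually (\<lambda>z. eval_fps (Abs_fps a) z = f z) (nhds 0)"
    by eventually_elim (use assms in \<open>auto simp: disc_series_def eval_fps_def sums_iff\<close>)
  with radius have "f has_fps_expansion Abs_fps a"
    unfolding has_fps_expansion_def by auto
  from fps_nth_fps_expansion[OF this, of k] show ?thesis
    by (simp add: tcoeff_def)
qed

lemma holomorphic_on_disc_series: "disc_series a f \<Longrightarrow> f holomorphic_on ball 0 1"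
  unfolding disc_series_def by (rule power_series_holomorphic) auto

lemma H2_outside_disc: "f \<in> H2 \<Longrightarrow> w \<notin> ball 0 1 \<Longrightarrow> f w = 0"
  by (simp add: H2_def disc_fun_def)

lemma H2_summable: "f \<in> H2 \<Longrightarrow> summable (\<lambda>k. (norm (tcoeff f k))^2)"
  by (simp add: H2_def)

lemma disc_series_tcoeff: "f \<in> H2 \<Longrightarrow> disc_series (tcoeff f) f"
  unfolding disc_series_def tcoeff_def
  using holomorphic_power_series by (force simp: H2_def disc_fun_def)

lemma H2I:
  assumes "\<And>w. w \<notin> ball 0 1 \<Longrightarrow> f w = 0" "disc_series a f" "summable (\<lambda>k. (norm (a k))^2)"
  shows "f \<in> H2" "tcoeff f = a"
proof -
  show "tcoeff f = a" using tcoeff_disc_series[OF assms(2)] by auto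
  then show "f \<in> H2"
    using assms holomorphic_on_disc_series[OF assms(2)] by (auto simp: H2_def disc_fun_def)
qed

lemma H2_eqI:
  assumes "f \<in> H2" "g \<in> H2" "tcoeff f = tcoeff g"
  shows "f = g"
proof
  fix w
  show "f w = g w"
  proof (cases "w \<in> ball 0 1")
    case True
    then show ?thesis using disc_series_tcoeff[OF assms(1)] disc_series_tcoeff[OF assms(2)] assms(3)
      unfolding disc_series_def by (metis sums_unique2)
  qed (use assms in \<open>auto simp: H2_outside_disc\<close>)
qed

section \<open>Square-summable sequences\<close>

lemma norm_mult_le_half_sum_sq:
  fixes x y :: "'a::real_normed_div_algebra"
  shows "norm (x * y) \<le> ((norm x)^2 + (norm y)^2) / 2"
proof -
  have "0 \<le> (norm x - norm y)^2" by simp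
  then show ?thesis by (simp add: norm_mult power2_eq_square algebra_simps)
qed

lemma norm_add_sq_le:
  fixes x y :: "'a::real_normed_vector"
  shows "(norm (x + y))^2 \<le> 2 * (norm x)^2 + 2 * (norm y)^2"
proof -
  have "(norm (x + y))^2 \<le> (norm x + norm y)^2"
    by (intro power_mono norm_triangle_ineq) auto
  also have "\<dots> \<le> 2 * (norm x)^2 + 2 * (norm y)^2"
    using norm_mult_le_half_sum_sq[of "norm x" "norm y"]
    by (simp add: power2_eq_square algebra_simps)
  finally show ?thesis .
qed

lemma summable_norm_sq_add:
  fixes a b :: "nat \<Rightarrow> 'a::real_normed_vector"
  assumes "summable (\<lambda>k. (norm (a k))^2)" "summable (\<lambda>k. (norm (b k))^2)"
  shows "summable (\<lambda>k. (norm (a k + b k))^2)"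
  by (rule summable_comparison_test[OF _ summable_add[OF summable_mult[OF assms(1), of 2]
        summable_mult[OF assms(2), of 2]]])
     (auto intro!: exI[of _ 0] norm_add_sq_le)

lemma summable_norm_sq_diff:
  fixes a b :: "nat \<Rightarrow> 'a::real_normed_vector"
  assumes "summable (\<lambda>k. (norm (a k))^2)" "summable (\<lambda>k. (norm (b k))^2)"
  shows "summable (\<lambda>k. (norm (a k - b k))^2)"
  using summable_norm_sq_add[OF assms(1), of "\<lambda>k. - b k"] assms(2) by simp

lemma summable_norm_mult_of_sq:
  fixes a b :: "nat \<Rightarrow> 'a::real_normed_div_algebra"
  assumes "summable (\<lambda>k. (norm (a k))^2)" "summable (\<lambda>k. (norm (b k))^2)"
  shows "summable (\<lambda>k. norm (a k * b k))"
proof -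
  have "norm (norm (a k * b k)) \<le> ((norm (a k))^2 + (norm (b k))^2) / 2" for k
    using norm_mult_le_half_sum_sq by simp
  then show ?thesis
    by (intro summable_comparison_test[OF _ summable_divide[OF summable_add[OF assms], of 2]]) blast
qed

lemma summable_norm_sq_power:
  fixes w :: "'a::real_normed_div_algebra"
  assumes "norm w < 1"
  shows "summable (\<lambda>k. (norm (w ^ k))^2)"
proof -
  have "norm w ^ 2 < 1" using assms by (simp add: power_less_one_iff)
  then show ?thesis
    using summable_geometric[of "norm w ^ 2"]
    by (simp add: norm_power power_mult[symmetric] mult.commute)
qed

lemma square_summable_Cauchy_limit:
  fixes a :: "nat \<Rightarrow> nat \<Rightarrow> 'a::banach"
  assumes summable_a: "\<And>i. summable (\<lambda>k. (norm (a i k))^2)"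
    and Cauchy_a: "\<And>e. e > 0 \<Longrightarrow> \<exists>N. \<forall>i\<ge>N. \<forall>j\<ge>N. (\<Sum>k. (norm (a i k - a j k))^2) < e"
  obtains b where "\<And>k. (\<lambda>i. a i k) \<longlonglongrightarrow> b k"
proof -
  have "Cauchy (\<lambda>i. a i k)" for k
  proof (rule CauchyI)
    fix e :: real assume e: "e > 0"
    obtain N where N: "\<forall>i\<ge>N. \<forall>j\<ge>N. (\<Sum>k. (norm (a i k - a j k))^2) < e^2"
      using Cauchy_a[of "e^2"] e by auto
    have "norm (a i k - a j k) < e" if "i \<ge> N" "j \<ge> N" for i j
    proof -
      have "summable (\<lambda>k. (norm (a i k - a j k))^2)"
        by (rule summable_norm_sq_diff[OF summable_a summable_a])
      then have "(norm (a i k - a j k))^2 \<le> (\<Sum>k. (norm (a i k - a j k))^2)"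
        using sum_le_suminf[of _ "{k}"] by fastforce
      also have "\<dots> < e^2" using N that by blast
      finally show ?thesis using e by (simp add: power_less_imp_less_base)
    qed
    then show "\<exists>M. \<forall>m\<ge>M. \<forall>n\<ge>M. norm (a m k - a n k) < e" by blast
  qed
  then have "convergent (\<lambda>i. a i k)" for k
    by (simp add: Cauchy_convergent_iff)
  then show ?thesis
    using that unfolding convergent_def by metis
qed

text \<open>Fatou's lemma for the counting measure: each partial sum for the limit is a limit of
  partial sums.\<close>
lemma square_summable_tail_limit:
  fixes a :: "nat \<Rightarrow> nat \<Rightarrow> 'a::real_normed_vector"
  assumes summable_a: "\<And>i. summable (\<lambda>k. (norm (a i k))^2)"
    and Cauchy_a: "\<And>e. e > 0 \<Longrightarrow> \<exists>N. \<forall>i\<ge>N. \<forall>j\<ge>N. (\<Sum>k. (norm (a i k - a j k))^2) < e"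
    and limit: "\<And>k. (\<lambda>i. a i k) \<longlonglongrightarrow> b k"
    and e: "e > 0"
  shows "\<exists>N. \<forall>i\<ge>N. summable (\<lambda>k. (norm (a i k - b k))^2) \<and> (\<Sum>k. (norm (a i k - b k))^2) \<le> e"
proof -
  obtain N where N: "\<forall>i\<ge>N. \<forall>j\<ge>N. (\<Sum>k. (norm (a i k - a j k))^2) < e"
    using Cauchy_a[OF e] by auto
  have partial: "(\<Sum>k<K. (norm (a i k - b k))^2) \<le> e" if i: "i \<ge> N" for i K
  proof (rule LIMSEQ_le_const2)
    show "(\<lambda>j. \<Sum>k<K. (norm (a i k - a j k))^2) \<longlonglongrightarrow> (\<Sum>k<K. (norm (a i k - b k))^2)"
      by (intro tendsto_intros limit)
    show "\<exists>N'. \<forall>j\<ge>N'. (\<Sum>k<K. (norm (a i k - a j k))^2) \<le> e"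
    proof (intro exI allI impI)
      fix j assume j: "j \<ge> N"
      have "summable (\<lambda>k. (norm (a i k - a j k))^2)"
        by (rule summable_norm_sq_diff[OF summable_a summable_a])
      then have "(\<Sum>k<K. (norm (a i k - a j k))^2) \<le> (\<Sum>k. (norm (a i k - a j k))^2)"
        by (intro sum_le_suminf) auto
      also have "\<dots> < e" using N i j by auto
      finally show "(\<Sum>k<K. (norm (a i k - a j k))^2) \<le> e" by simp
    qed
  qed
  have "summable (\<lambda>k. (norm (a i k - b k))^2) \<and> (\<Sum>k. (norm (a i k - b k))^2) \<le> e" if "i \<ge> N" for i
  proof
    show s: "summable (\<lambda>k. (norm (a i k - b k))^2)"
      by (rule summableI_nonneg_bounded[of _ e]) (use partial that in auto)
    show "(\<Sum>k. (norm (a i k - b k))^2) \<le> e"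
      by (rule suminf_le_const[OF s]) (use partial that in auto)
  qed
  then show ?thesis by blast
qed

definition H2_of_coeffs :: "(nat \<Rightarrow> complex) \<Rightarrow> complex \<Rightarrow> complex" where
  "H2_of_coeffs a = onD (\<lambda>w. \<Sum>k. a k * w ^ k)"

lemma H2_of_coeffs:
  assumes "summable (\<lambda>k. (norm (a k))^2)"
  shows "H2_of_coeffs a \<in> H2" "tcoeff (H2_of_coeffs a) = a"
proof -
  have series: "disc_series a (H2_of_coeffs a)" unfolding disc_series_def
  proof
    fix w :: complex assume w: "w \<in> ball 0 1"
    have "summable (\<lambda>k. norm (a k * w ^ k))"
      using w by (intro summable_norm_mult_of_sq assms summable_norm_sq_power) auto
    then show "(\<lambda>k. a k * w ^ k) sums H2_of_coeffs a w"
      using w by (simp add: H2_of_coeffs_def onD_def summable_sums summable_norm_cancel)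
  qed
  show "H2_of_coeffs a \<in> H2" "tcoeff (H2_of_coeffs a) = a"
    by (rule H2I[OF _ series assms]; simp add: H2_of_coeffs_def onD_def)+
qed

lemma H2_zero: "(\<lambda>w. 0) \<in> H2" "tcoeff (\<lambda>w. 0) = (\<lambda>k. 0)"
  by (rule H2I[where a="\<lambda>k. 0"]; simp add: disc_series_def)+

lemma H2_add:
  assumes "f \<in> H2" "g \<in> H2"
  shows "(\<lambda>w. f w + g w) \<in> H2" "tcoeff (\<lambda>w. f w + g w) = (\<lambda>k. tcoeff f k + tcoeff g k)"
proof -
  have "disc_series (\<lambda>k. tcoeff f k + tcoeff g k) (\<lambda>w. f w + g w)"
    using disc_series_tcoeff[OF assms(1)] disc_series_tcoeff[OF assms(2)]
    unfolding disc_series_def by (auto simp: distrib_right intro: sums_add)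
  moreover have "summable (\<lambda>k. (norm (tcoeff f k + tcoeff g k))^2)"
    by (intro summable_norm_sq_add H2_summable assms)
  ultimately show "(\<lambda>w. f w + g w) \<in> H2" "tcoeff (\<lambda>w. f w + g w) = (\<lambda>k. tcoeff f k + tcoeff g k)"
    by (rule H2I[rotated]; use assms in \<open>simp add: H2_outside_disc\<close>)+
qed

lemma H2_scale:
  assumes "f \<in> H2"
  shows "(\<lambda>w. c * f w) \<in> H2" "tcoeff (\<lambda>w. c * f w) = (\<lambda>k. c * tcoeff f k)"
proof -
  have "disc_series (\<lambda>k. c * tcoeff f k) (\<lambda>w. c * f w)"
    using disc_series_tcoeff[OF assms] unfolding disc_series_def
    by (auto simp: mult.assoc intro: sums_mult)
  moreover have "summable (\<lambda>k. (norm (c * tcoeff f k))^2)"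
    using summable_mult[OF H2_summable[OF assms], of "(norm c)^2"]
    by (simp add: norm_mult power_mult_distrib)
  ultimately show "(\<lambda>w. c * f w) \<in> H2" "tcoeff (\<lambda>w. c * f w) = (\<lambda>k. c * tcoeff f k)"
    by (rule H2I[rotated]; use assms in \<open>simp add: H2_outside_disc\<close>)+
qed

lemma H2_diff:
  assumes "f \<in> H2" "g \<in> H2"
  shows "(\<lambda>w. f w - g w) \<in> H2" "tcoeff (\<lambda>w. f w - g w) = (\<lambda>k. tcoeff f k - tcoeff g k)"
  using H2_add[OF assms(1) H2_scale(1)[OF assms(2), of "-1"]] H2_scale(2)[OF assms(2), of "-1"]
  by simp_all

lemma H2_sum:
  assumes "finite A" "\<And>i. i \<in> A \<Longrightarrow> f i \<in> H2"
  shows "(\<lambda>w. \<Sum>i\<in>A. c i * f i w) \<in> H2"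
    "tcoeff (\<lambda>w. \<Sum>i\<in>A. c i * f i w) = (\<lambda>k. \<Sum>i\<in>A. c i * tcoeff (f i) k)"
proof -
  have "(\<lambda>w. \<Sum>i\<in>A. c i * f i w) \<in> H2 \<and>
      tcoeff (\<lambda>w. \<Sum>i\<in>A. c i * f i w) = (\<lambda>k. \<Sum>i\<in>A. c i * tcoeff (f i) k)"
    using assms
  proof (induction A rule: finite_induct)
    case (insert x A)
    then have "f x \<in> H2" by auto
    with insert show ?case
      using H2_add[OF H2_scale(1)[OF \<open>f x \<in> H2\<close>, of "c x"]] H2_scale(2)[OF \<open>f x \<in> H2\<close>]
      by simp
  qed (simp add: H2_zero)
  then show "(\<lambda>w. \<Sum>i\<in>A. c i * f i w) \<in> H2"
    "tcoeff (\<lambda>w. \<Sum>i\<in>A. c i * f i w) = (\<lambda>k. \<Sum>i\<in>A. c i * tcoeff (f i) k)"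
    by auto
qed

lemma H2_mult_power:
  assumes "f \<in> H2"
  shows "(\<lambda>w. w ^ m * f w) \<in> H2"
    "tcoeff (\<lambda>w. w ^ m * f w) = (\<lambda>k. if k < m then 0 else tcoeff f (k - m))"
proof -
  define b where "b = (\<lambda>k. if k < m then 0 else tcoeff f (k - m))"
  have "disc_series b (\<lambda>w. w ^ m * f w)" unfolding disc_series_def
  proof
    fix w :: complex assume w: "w \<in> ball 0 1"
    have "(\<lambda>k. w ^ m * (tcoeff f k * w ^ k)) sums (w ^ m * f w)"
      using disc_series_tcoeff[OF assms] w unfolding disc_series_def by (intro sums_mult) auto
    moreover have "(\<lambda>k. w ^ m * (tcoeff f k * w ^ k)) = (\<lambda>k. b (k + m) * w ^ (k + m))"
      by (auto simp: b_def power_add)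
    ultimately show "(\<lambda>k. b k * w ^ k) sums (w ^ m * f w)"
      using sums_zero_iff_shift[of m "\<lambda>k. b k * w ^ k"] by (simp add: b_def)
  qed
  moreover have "summable (\<lambda>k. (norm (b k))^2)"
    using H2_summable[OF assms] summable_iff_shift[of "\<lambda>k. (norm (b k))^2" m]
    by (simp add: b_def)
  ultimately show "(\<lambda>w. w ^ m * f w) \<in> H2" "tcoeff (\<lambda>w. w ^ m * f w) = b"
    by (rule H2I[rotated]; use assms in \<open>simp add: H2_outside_disc\<close>)+
qed

lemma H2_Mz: "f \<in> H2 \<Longrightarrow> Mz f \<in> H2"
  using H2_mult_power(1)[of f 1] by (simp add: Mz_def)

lemma tcoeff_Mz: "f \<in> H2 \<Longrightarrow> tcoeff (Mz f) = (\<lambda>k. if k = 0 then 0 else tcoeff f (k - 1))"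
  using H2_mult_power(2)[of f 1] by (simp add: Mz_def)

lemma H2_mult_power_cancel:
  assumes "f \<in> H2" "g \<in> H2" "(\<lambda>w. w ^ m * f w) = (\<lambda>w. w ^ m * g w)"
  shows "f = g"
proof (rule H2_eqI[OF assms(1,2)], rule ext)
  fix k
  have "tcoeff (\<lambda>w. w ^ m * f w) (k + m) = tcoeff (\<lambda>w. w ^ m * g w) (k + m)"
    using assms(3) by simp
  then show "tcoeff f k = tcoeff g k"
    unfolding H2_mult_power(2)[OF assms(1)] H2_mult_power(2)[OF assms(2)] by simp
qed

lemma H2_poly: "onD (poly p) \<in> H2" "tcoeff (onD (poly p)) = coeff p"
proof -
  have "disc_series (coeff p) (onD (poly p))" unfolding disc_series_def
  proof
    fix w :: complex assume "w \<in> ball 0 1"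
    moreover have "(\<lambda>k. coeff p k * w ^ k) sums (\<Sum>k\<le>degree p. coeff p k * w ^ k)"
      by (rule sums_finite) (auto simp: coeff_eq_0)
    ultimately show "(\<lambda>k. coeff p k * w ^ k) sums onD (poly p) w"
      by (simp add: onD_def poly_altdef)
  qed
  moreover have "summable (\<lambda>k. (norm (coeff p k))^2)"
    by (rule summable_finite[of "{..degree p}"]) (auto simp: coeff_eq_0)
  ultimately show "onD (poly p) \<in> H2" "tcoeff (onD (poly p)) = coeff p"
    by (rule H2I[rotated]; simp add: onD_def)+
qed

lemma H2_zpow: "zpow m \<in> H2" "tcoeff (zpow m) = (\<lambda>k. if k = m then 1 else 0)"
proof -
  have "zpow m = onD (poly (monom 1 m))"
    unfolding zpow_def by (rule arg_cong[where f=onD]) (auto simp: poly_monom)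
  then show "zpow m \<in> H2" "tcoeff (zpow m) = (\<lambda>k. if k = m then 1 else 0)"
    using H2_poly[of "monom 1 m"] by (auto simp: coeff_monom)
qed

lemma H2_taylor_split:
  assumes "g \<in> H2"
  obtains h where "h \<in> H2" "g = (\<lambda>w. (\<Sum>j<N. tcoeff g j * zpow j w) + w ^ N * h w)"
proof -
  define h where "h = H2_of_coeffs (\<lambda>k. tcoeff g (k + N))"
  have "summable (\<lambda>k. (norm (tcoeff g (k + N)))^2)"
    using H2_summable[OF assms] by (rule summable_iff_shift[THEN iffD2])
  note h = H2_of_coeffs[OF this, folded h_def]
  have "g w = (\<Sum>j<N. tcoeff g j * zpow j w) + w ^ N * h w" for w
  proof (cases "w \<in> ball 0 1")
    case True
    have "(\<lambda>k. tcoeff g (k + N) * w ^ k) sums h w"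
      using disc_series_tcoeff[OF h(1)] True h(2) by (auto simp: disc_series_def)
    then have "(\<lambda>k. w ^ N * (tcoeff g (k + N) * w ^ k)) sums (w ^ N * h w)"
      by (rule sums_mult)
    then have "(\<lambda>k. (\<lambda>j. tcoeff g j * w ^ j) (k + N)) sums (w ^ N * h w)"
      by (simp add: power_add mult_ac)
    then have "(\<lambda>j. tcoeff g j * w ^ j) sums (w ^ N * h w + (\<Sum>j<N. tcoeff g j * w ^ j))"
      by (subst (asm) sums_iff_shift)
    moreover have "(\<lambda>j. tcoeff g j * w ^ j) sums g w"
      using disc_series_tcoeff[OF assms] True by (auto simp: disc_series_def)
    ultimately have "g w = w ^ N * h w + (\<Sum>j<N. tcoeff g j * w ^ j)"
      by (metis sums_unique2)
    then show ?thesis using True by (simp add: zpow_def onD_def)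
  next
    case False
    then show ?thesis using assms h by (simp add: H2_outside_disc zpow_def onD_def)
  qed
  then show ?thesis using that h by blast
qed

section \<open>The inner product of H2\<close>

lemma summable_h2_inner:
  assumes "f \<in> H2" "g \<in> H2"
  shows "summable (\<lambda>k. tcoeff f k * cnj (tcoeff g k))"
  by (rule summable_norm_cancel, rule summable_norm_mult_of_sq)
     (use H2_summable[OF assms(1)] H2_summable[OF assms(2)] in auto)

lemma h2_inner_add_left:
  assumes "f \<in> H2" "g \<in> H2" "h \<in> H2"
  shows "h2_inner (\<lambda>w. f w + g w) h = h2_inner f h + h2_inner g h"
  unfolding h2_inner_def H2_add(2)[OF assms(1,2)] distrib_right
  by (intro suminf_add[symmetric] summable_h2_inner assms)

lemma h2_inner_scale_left:
  assumes "f \<in> H2" "g \<in> H2"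
  shows "h2_inner (\<lambda>w. c * f w) g = c * h2_inner f g"
  unfolding h2_inner_def H2_scale(2)[OF assms(1)] mult.assoc
  by (intro suminf_mult summable_h2_inner assms)

lemma h2_inner_commute:
  assumes "f \<in> H2" "g \<in> H2"
  shows "h2_inner g f = cnj (h2_inner f g)"
proof -
  have "(\<lambda>k. cnj (tcoeff f k * cnj (tcoeff g k))) sums cnj (h2_inner f g)"
    unfolding h2_inner_def sums_cnj by (intro summable_sums summable_h2_inner assms)
  then show ?thesis
    unfolding h2_inner_def by (simp add: mult.commute sums_iff)
qed

lemma h2_inner_sum_left:
  assumes "finite A" "\<And>i. i \<in> A \<Longrightarrow> f i \<in> H2" "g \<in> H2"
  shows "h2_inner (\<lambda>w. \<Sum>i\<in>A. c i * f i w) g = (\<Sum>i\<in>A. c i * h2_inner (f i) g)"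
  using assms(1,2)
proof (induction A rule: finite_induct)
  case empty
  then show ?case by (simp add: h2_inner_def H2_zero(2))
next
  case (insert x A)
  have "f x \<in> H2" using insert by auto
  moreover have "(\<lambda>w. \<Sum>i\<in>A. c i * f i w) \<in> H2" using H2_sum[of A f c] insert by auto
  ultimately show ?case
    using h2_inner_add_left[OF H2_scale(1) _ assms(3)] h2_inner_scale_left[OF _ assms(3)] insert
    by simp
qed

lemma h2_inner_sum_right:
  assumes "finite A" "\<And>i. i \<in> A \<Longrightarrow> f i \<in> H2" "g \<in> H2"
  shows "h2_inner g (\<lambda>w. \<Sum>i\<in>A. c i * f i w) = (\<Sum>i\<in>A. cnj (c i) * h2_inner g (f i))"
proof -
  have "(\<lambda>w. \<Sum>i\<in>A. c i * f i w) \<in> H2"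
    using H2_sum(1) assms(1,2) .
  then have "h2_inner g (\<lambda>w. \<Sum>i\<in>A. c i * f i w) = cnj (h2_inner (\<lambda>w. \<Sum>i\<in>A. c i * f i w) g)"
    using h2_inner_commute assms(3) by blast
  also have "\<dots> = (\<Sum>i\<in>A. cnj (c i) * cnj (h2_inner (f i) g))"
    using h2_inner_sum_left[OF assms, where c=c] by simp
  also have "\<dots> = (\<Sum>i\<in>A. cnj (c i) * h2_inner g (f i))"
    using assms(2,3) by (intro sum.cong refl) (simp add: h2_inner_commute[of g])
  finally show ?thesis .
qed

lemma h2_inner_self:
  assumes "f \<in> H2"
  shows "h2_inner f f = complex_of_real (\<Sum>k. (norm (tcoeff f k))^2)"
  unfolding h2_inner_def complex_norm_square[symmetric]
  by (rule suminf_of_real[OF H2_summable[OF assms], symmetric])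

lemma h2_inner_self_nonneg:
  assumes "f \<in> H2"
  shows "Im (h2_inner f f) = 0 \<and> Re (h2_inner f f) \<ge> 0"
  unfolding h2_inner_self[OF assms] by (auto intro!: suminf_nonneg H2_summable assms)

lemma h2_norm_eq_sqrt_inner: "f \<in> H2 \<Longrightarrow> h2_norm f = sqrt (Re (h2_inner f f))"
  by (simp add: h2_inner_self h2_norm_def)

lemma h2_inner_self_eq_0:
  assumes "f \<in> H2" "h2_inner f f = 0"
  shows "f = (\<lambda>w. 0)"
proof (rule H2_eqI[OF assms(1) H2_zero(1)])
  have "(\<Sum>k. (norm (tcoeff f k))^2) = 0"
    using assms(2) h2_inner_self[OF assms(1)] by simp
  then show "tcoeff f = tcoeff (\<lambda>w. 0)"
    using suminf_eq_zero_iff[OF H2_summable[OF assms(1)]] by (auto simp: H2_zero)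
qed

lemma h2_norm_add_le:
  assumes "f \<in> H2" "g \<in> H2"
  shows "h2_norm (\<lambda>w. f w + g w) \<le> sqrt 2 * (h2_norm f + h2_norm g)"
proof -
  define A where "A = (\<Sum>k. (norm (tcoeff f k))^2)"
  define B where "B = (\<Sum>k. (norm (tcoeff g k))^2)"
  note summable = H2_summable[OF assms(1)] H2_summable[OF assms(2)]
  have "A \<ge> 0" "B \<ge> 0"
    unfolding A_def B_def by (intro suminf_nonneg summable; simp)+
  have "(\<Sum>k. (norm (tcoeff f k + tcoeff g k))^2)
      \<le> (\<Sum>k. 2 * (norm (tcoeff f k))^2 + 2 * (norm (tcoeff g k))^2)"
    by (intro suminf_le norm_add_sq_le summable_norm_sq_add summable summable_add summable_mult)
  also have "\<dots> = 2 * (A + B)"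
    unfolding A_def B_def using summable
    by (simp add: suminf_add[symmetric] suminf_mult summable_mult algebra_simps)
  finally have "h2_norm (\<lambda>w. f w + g w) \<le> sqrt 2 * sqrt (A + B)"
    by (simp add: h2_norm_def H2_add(2)[OF assms] real_sqrt_mult[symmetric])
  also have "\<dots> \<le> sqrt 2 * (sqrt A + sqrt B)"
    by (intro mult_left_mono sqrt_add_le_add_sqrt \<open>A \<ge> 0\<close> \<open>B \<ge> 0\<close>) auto
  finally show ?thesis by (simp add: h2_norm_def A_def B_def)
qed

lemma h2_norm_Mz:
  assumes "f \<in> H2"
  shows "h2_norm (Mz f) = h2_norm f"
proof -
  have "(\<lambda>k. (norm (tcoeff (Mz f) (k + 1)))^2) sums (\<Sum>k. (norm (tcoeff f k))^2)"
    using summable_sums[OF H2_summable[OF assms]] by (simp add: tcoeff_Mz[OF assms])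
  then have "(\<lambda>k. (norm (tcoeff (Mz f) k))^2) sums (\<Sum>k. (norm (tcoeff f k))^2)"
    by (subst (asm) sums_zero_iff_shift) (auto simp: tcoeff_Mz[OF assms])
  then show ?thesis unfolding h2_norm_def by (simp add: sums_iff)
qed

lemma H2_complete:
  assumes Y: "\<And>i. Y i \<in> H2"
    and Cauchy_Y: "\<And>e. e > 0 \<Longrightarrow> \<exists>N. \<forall>i\<ge>N. \<forall>j\<ge>N. h2_norm (\<lambda>w. Y i w - Y j w) < e"
  shows "\<exists>L\<in>H2. (\<lambda>i. h2_norm (\<lambda>w. Y i w - L w)) \<longlonglongrightarrow> 0"
proof -
  define a where "a = (\<lambda>i. tcoeff (Y i))"
  have norm_diff: "h2_norm (\<lambda>w. Y i w - g w) = sqrt (\<Sum>k. (norm (a i k - tcoeff g k))^2)"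
    if "g \<in> H2" for i g
    by (simp add: h2_norm_def H2_diff(2)[OF Y that] a_def)
  have Cauchy_a: "\<exists>N. \<forall>i\<ge>N. \<forall>j\<ge>N. (\<Sum>k. (norm (a i k - a j k))^2) < e" if "e > 0" for e
    using Cauchy_Y[of "sqrt e"] that by (simp add: norm_diff[OF Y] a_def real_sqrt_less_iff)
  have summable_a: "summable (\<lambda>k. (norm (a i k))^2)" for i
    unfolding a_def by (rule H2_summable[OF Y])
  obtain b where b: "\<And>k. (\<lambda>i. a i k) \<longlonglongrightarrow> b k"
    using square_summable_Cauchy_limit[OF summable_a Cauchy_a] by blast
  note tail = square_summable_tail_limit[OF summable_a Cauchy_a b]
  obtain N where "summable (\<lambda>k. (norm (a N k - b k))^2)"
    using tail[of 1] by auto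
  then have "summable (\<lambda>k. (norm (a N k - (a N k - b k)))^2)"
    by (rule summable_norm_sq_diff[OF summable_a])
  then have "summable (\<lambda>k. (norm (b k))^2)" by simp
  note L = H2_of_coeffs[OF this]
  have "(\<lambda>i. h2_norm (\<lambda>w. Y i w - H2_of_coeffs b w)) \<longlonglongrightarrow> 0"
  proof (rule LIMSEQ_I)
    fix r :: real assume "r > 0"
    then obtain N where N: "\<forall>i\<ge>N. summable (\<lambda>k. (norm (a i k - b k))^2) \<and>
        (\<Sum>k. (norm (a i k - b k))^2) \<le> (r/2)^2"
      using tail[of "(r/2)^2"] by auto
    have "norm (h2_norm (\<lambda>w. Y i w - H2_of_coeffs b w)) < r" if "i \<ge> N" for i
    proof -
      have "0 \<le> (\<Sum>k. (norm (a i k - b k))^2)" "(\<Sum>k. (norm (a i k - b k))^2) \<le> (r/2)^2"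
        using N that by (auto intro: suminf_nonneg)
      then have "\<bar>sqrt (\<Sum>k. (norm (a i k - b k))^2)\<bar> \<le> r / 2"
        using \<open>r > 0\<close> real_sqrt_le_mono[of _ "(r/2)^2"] by simp
      then show ?thesis using \<open>r > 0\<close> by (simp add: norm_diff[OF L(1)] L(2))
    qed
    then show "\<exists>N. \<forall>i\<ge>N. norm (h2_norm (\<lambda>w. Y i w - H2_of_coeffs b w) - 0) < r" by auto
  qed
  then show ?thesis using L by blast
qed

definition H2_linear :: "((complex \<Rightarrow> complex) \<Rightarrow> (complex \<Rightarrow> complex)) \<Rightarrow> bool" where
  "H2_linear T \<longleftrightarrow> (\<forall>f\<in>H2. T f \<in> H2) \<and>
     (\<forall>f\<in>H2. \<forall>g\<in>H2. T (\<lambda>w. f w + g w) = (\<lambda>w. T f w + T g w)) \<and>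
     (\<forall>f\<in>H2. \<forall>c. T (\<lambda>w. c * f w) = (\<lambda>w. c * T f w))"

lemma H2_linearD:
  assumes "H2_linear T"
  shows "\<And>f. f \<in> H2 \<Longrightarrow> T f \<in> H2"
    "\<And>f g. f \<in> H2 \<Longrightarrow> g \<in> H2 \<Longrightarrow> T (\<lambda>w. f w + g w) = (\<lambda>w. T f w + T g w)"
    "\<And>f c. f \<in> H2 \<Longrightarrow> T (\<lambda>w. c * f w) = (\<lambda>w. c * T f w)"
  using assms unfolding H2_linear_def by blast+

lemma H2_linear_zero:
  assumes "H2_linear T"
  shows "T (\<lambda>w. 0) = (\<lambda>w. 0)"
  using H2_linearD(3)[OF assms H2_zero(1), of 0] by simp

lemma H2_linear_diff:
  assumes "H2_linear T" "f \<in> H2" "g \<in> H2"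
  shows "T (\<lambda>w. f w - g w) = (\<lambda>w. T f w - T g w)"
  using H2_linearD(2)[OF assms(1,2) H2_scale(1)[OF assms(3), of "-1"]]
    H2_linearD(3)[OF assms(1,3), of "-1"]
  by simp

lemma H2_linear_sum:
  assumes "H2_linear T" "finite A" "\<And>i. i \<in> A \<Longrightarrow> f i \<in> H2"
  shows "T (\<lambda>w. \<Sum>i\<in>A. c i * f i w) = (\<lambda>w. \<Sum>i\<in>A. c i * T (f i) w)"
  using assms(2,3)
proof (induction A rule: finite_induct)
  case empty
  then show ?case using H2_linear_zero[OF assms(1)] by simp
next
  case (insert x A)
  have fx: "f x \<in> H2" using insert by auto
  have rest: "(\<lambda>w. \<Sum>i\<in>A. c i * f i w) \<in> H2" using H2_sum[of A f c] insert by auto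
  have insert_eq: "(\<lambda>w. \<Sum>i\<in>insert x A. c i * f i w) =
      (\<lambda>w. (\<lambda>w. c x * f x w) w + (\<lambda>w. \<Sum>i\<in>A. c i * f i w) w)"
    using insert by simp
  show ?case
    unfolding insert_eq H2_linearD(2)[OF assms(1) H2_scale(1)[OF fx] rest]
      H2_linearD(3)[OF assms(1) fx]
    using insert by auto
qed

lemma H2_linear_comp: "H2_linear T \<Longrightarrow> H2_linear T' \<Longrightarrow> H2_linear (T \<circ> T')"
  unfolding H2_linear_def by auto

lemma H2_linear_funpow: "H2_linear T \<Longrightarrow> H2_linear (T ^^ k)"
proof (induction k)
  case 0
  then show ?case by (simp add: H2_linear_def)
next
  case (Suc k)
  then show ?case using H2_linear_comp[of T "T ^^ k"] by (simp only: funpow.simps)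
qed

lemma bounded_op_H2_linear: "bounded_op_H2 T \<Longrightarrow> H2_linear T"
  unfolding bounded_op_H2_def H2_linear_def by blast


section \<open>Transport of the H2 structure along an injective intertwiner\<close>

locale H2_transport =
  fixes U S :: "(complex \<Rightarrow> complex) \<Rightarrow> complex \<Rightarrow> complex"
    and e :: "complex \<Rightarrow> complex \<Rightarrow> complex"
  assumes U_linear: "H2_linear U"
    and U_inj: "inj_on U H2"
    and S_H2: "\<And>f. f \<in> H2 \<Longrightarrow> S f \<in> H2"
    and S_bounded: "\<exists>C. \<forall>f\<in>H2. h2_norm (S f) \<le> C * h2_norm f"
    and U_S: "\<And>f. f \<in> H2 \<Longrightarrow> U (S f) = Mz (U f)"
    and e_H2: "\<And>w. w \<in> ball 0 1 \<Longrightarrow> e w \<in> H2"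
    and U_eval: "\<And>g w. g \<in> H2 \<Longrightarrow> w \<in> ball 0 1 \<Longrightarrow> h2_inner g (e w) = U g w"
begin

definition range_inner :: "(complex \<Rightarrow> complex) \<Rightarrow> (complex \<Rightarrow> complex) \<Rightarrow> complex" where
  "range_inner a b = h2_inner (inv_into H2 U a) (inv_into H2 U b)"

definition range_kernel :: "complex \<Rightarrow> complex \<Rightarrow> complex" where
  "range_kernel z w = U (e w) z"

lemma range_inner_U: "f \<in> H2 \<Longrightarrow> g \<in> H2 \<Longrightarrow> range_inner (U f) (U g) = h2_inner f g"
  by (simp add: range_inner_def inv_into_f_f[OF U_inj])

lemma norm_range_inner_U: "f \<in> H2 \<Longrightarrow> sqrt (Re (range_inner (U f) (U f))) = h2_norm f"
  by (simp add: range_inner_U h2_norm_eq_sqrt_inner)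

lemma range_subspace:
  "(\<forall>f\<in>U ` H2. disc_fun f) \<and> (\<lambda>w. 0) \<in> U ` H2 \<and>
   (\<forall>f\<in>U ` H2. \<forall>g\<in>U ` H2. (\<lambda>w. f w + g w) \<in> U ` H2) \<and>
   (\<forall>f\<in>U ` H2. \<forall>c. (\<lambda>w. c * f w) \<in> U ` H2)"
proof (intro conjI ballI allI)
  show "disc_fun f" if "f \<in> U ` H2" for f
    using that H2_linearD(1)[OF U_linear] by (auto simp: H2_def)
  show "(\<lambda>w. 0) \<in> U ` H2"
    using H2_linear_zero[OF U_linear] H2_zero(1) by (metis image_eqI)
  show "(\<lambda>w. f w + g w) \<in> U ` H2" if "f \<in> U ` H2" "g \<in> U ` H2" for f g
    using that H2_linearD(2)[OF U_linear, symmetric] H2_add(1) by blast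
  show "(\<lambda>w. c * f w) \<in> U ` H2" if "f \<in> U ` H2" for f c
    using that H2_linearD(3)[OF U_linear, symmetric] H2_scale(1) by blast
qed

lemma range_inner_add_left:
  assumes "a \<in> H2" "b \<in> H2" "d \<in> H2"
  shows "range_inner (\<lambda>w. U a w + U b w) (U d) = range_inner (U a) (U d) + range_inner (U b) (U d)"
proof -
  have "range_inner (\<lambda>w. U a w + U b w) (U d) = range_inner (U (\<lambda>w. a w + b w)) (U d)"
    using H2_linearD(2)[OF U_linear assms(1,2)] by simp
  also have "\<dots> = range_inner (U a) (U d) + range_inner (U b) (U d)"
    using assms by (simp add: range_inner_U H2_add(1) h2_inner_add_left)
  finally show ?thesis .
qed

lemma range_inner_scale_left:
  assumes "a \<in> H2" "b \<in> H2"
  shows "range_inner (\<lambda>w. c * U a w) (U b) = c * range_inner (U a) (U b)"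
proof -
  have "range_inner (\<lambda>w. c * U a w) (U b) = range_inner (U (\<lambda>w. c * a w)) (U b)"
    using H2_linearD(3)[OF U_linear assms(1), of c] by simp
  also have "\<dots> = c * range_inner (U a) (U b)"
    using assms by (simp add: range_inner_U H2_scale(1) h2_inner_scale_left)
  finally show ?thesis .
qed

lemma range_inner_product:
  "(\<forall>f\<in>U ` H2. \<forall>g\<in>U ` H2. \<forall>h\<in>U ` H2.
      range_inner (\<lambda>w. f w + g w) h = range_inner f h + range_inner g h) \<and>
   (\<forall>f\<in>U ` H2. \<forall>g\<in>U ` H2. \<forall>c. range_inner (\<lambda>w. c * f w) g = c * range_inner f g) \<and>
   (\<forall>f\<in>U ` H2. \<forall>g\<in>U ` H2. range_inner g f = cnj (range_inner f g)) \<and>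
   (\<forall>f\<in>U ` H2. Im (range_inner f f) = 0 \<and> Re (range_inner f f) \<ge> 0) \<and>
   (\<forall>f\<in>U ` H2. range_inner f f = 0 \<longrightarrow> f = (\<lambda>w. 0))"
proof (intro conjI ballI allI impI; elim imageE; hypsubst)
  show "range_inner (\<lambda>w. U a w + U b w) (U d) = range_inner (U a) (U d) + range_inner (U b) (U d)"
    if "a \<in> H2" "b \<in> H2" "d \<in> H2" for a b d
    using that by (rule range_inner_add_left)
  show "range_inner (\<lambda>w. c * U a w) (U b) = c * range_inner (U a) (U b)"
    if "a \<in> H2" "b \<in> H2" for a b c
    using that by (rule range_inner_scale_left)
  show "range_inner (U b) (U a) = cnj (range_inner (U a) (U b))" if "a \<in> H2" "b \<in> H2" for a b
    using that by (simp add: range_inner_U h2_inner_commute[OF that])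
  show "Im (range_inner (U a) (U a)) = 0" "Re (range_inner (U a) (U a)) \<ge> 0" if "a \<in> H2" for a
    using that h2_inner_self_nonneg by (simp_all add: range_inner_U)
  show "U a = (\<lambda>w. 0)" if "a \<in> H2" "range_inner (U a) (U a) = 0" for a
    using that h2_inner_self_eq_0 H2_linear_zero[OF U_linear] by (simp add: range_inner_U)
qed

lemma range_complete:
  "\<forall>X. (\<forall>i. X i \<in> U ` H2) \<and>
     (\<forall>r>0. \<exists>N. \<forall>i\<ge>N. \<forall>j\<ge>N. sqrt (Re (range_inner (\<lambda>w. X i w - X j w) (\<lambda>w. X i w - X j w))) < r)
   \<longrightarrow> (\<exists>L\<in>U ` H2. (\<lambda>i. sqrt (Re (range_inner (\<lambda>w. X i w - L w) (\<lambda>w. X i w - L w)))) \<longlonglongrightarrow> 0)"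
proof (intro allI impI, elim conjE)
  fix X :: "nat \<Rightarrow> complex \<Rightarrow> complex"
  assume range: "\<forall>i. X i \<in> U ` H2"
    and Cauchy: "\<forall>r>0. \<exists>N. \<forall>i\<ge>N. \<forall>j\<ge>N.
      sqrt (Re (range_inner (\<lambda>w. X i w - X j w) (\<lambda>w. X i w - X j w))) < r"
  define Y where "Y i = inv_into H2 U (X i)" for i
  have Y: "Y i \<in> H2" "X i = U (Y i)" for i
    using range by (auto simp: Y_def inv_into_into f_inv_into_f)
  have dist_eq: "sqrt (Re (range_inner (\<lambda>w. X i w - U g w) (\<lambda>w. X i w - U g w)))
      = h2_norm (\<lambda>w. Y i w - g w)" if "g \<in> H2" for i g
    using that Y by (simp add: H2_linear_diff[OF U_linear, symmetric] norm_range_inner_U H2_diff(1))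
  have "\<forall>r>0. \<exists>N. \<forall>i\<ge>N. \<forall>j\<ge>N. h2_norm (\<lambda>w. Y i w - Y j w) < r"
    using Cauchy by (simp add: dist_eq[OF Y(1), symmetric] Y(2)[symmetric])
  then obtain L where L: "L \<in> H2" "(\<lambda>i. h2_norm (\<lambda>w. Y i w - L w)) \<longlonglongrightarrow> 0"
    using H2_complete[of Y] Y(1) by blast
  then show "\<exists>L\<in>U ` H2. (\<lambda>i. sqrt (Re (range_inner (\<lambda>w. X i w - L w) (\<lambda>w. X i w - L w)))) \<longlonglongrightarrow> 0"
    using dist_eq[OF L(1)] by (intro bexI[of _ "U L"]) auto
qed

lemma range_kernel_eq_inner:
  assumes "z \<in> ball 0 1" "w \<in> ball 0 1"
  shows "range_kernel z w = h2_inner (e w) (e z)"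
  using U_eval[OF e_H2[OF assms(2)] assms(1)] by (simp add: range_kernel_def)

lemma range_kernel_positive:
  "\<forall>zs c. set zs \<subseteq> ball 0 1 \<longrightarrow>
     (let S = (\<Sum>i<length zs. \<Sum>j<length zs. c i * cnj (c j) * range_kernel (zs ! j) (zs ! i))
      in Im S = 0 \<and> Re S \<ge> 0)"
proof (intro allI impI)
  fix zs :: "complex list" and c :: "nat \<Rightarrow> complex"
  assume zs: "set zs \<subseteq> ball 0 1"
  define m where "m = length zs"
  define E where "E w = (\<Sum>i<m. c i * e (zs ! i) w)" for w
  have e_zs: "e (zs ! i) \<in> H2" if "i < m" for i
    using that by (intro e_H2 subsetD[OF zs] nth_mem) (simp add: m_def)
  have E: "E \<in> H2"
    unfolding E_def using H2_sum(1)[of "{..<m}" "\<lambda>i. e (zs ! i)" c] e_zs by auto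
  have "h2_inner E E = (\<Sum>i<m. c i * h2_inner (e (zs ! i)) E)"
    unfolding E_def[abs_def] using e_zs E[unfolded E_def[abs_def]] by (intro h2_inner_sum_left) auto
  also have "\<dots> = (\<Sum>i<m. c i * (\<Sum>j<m. cnj (c j) * h2_inner (e (zs ! i)) (e (zs ! j))))"
  proof (intro sum.cong refl arg_cong[where f="(*) _"])
    fix i assume "i \<in> {..<m}"
    then show "h2_inner (e (zs ! i)) E = (\<Sum>j<m. cnj (c j) * h2_inner (e (zs ! i)) (e (zs ! j)))"
      unfolding E_def[abs_def] by (intro h2_inner_sum_right) (auto intro: e_zs)
  qed
  also have "\<dots> = (\<Sum>i<m. \<Sum>j<m. c i * cnj (c j) * range_kernel (zs ! j) (zs ! i))"
    using zs by (simp add: sum_distrib_left range_kernel_eq_inner m_def subset_iff mult.assoc)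
  finally show "let S = (\<Sum>i<length zs. \<Sum>j<length zs.
        c i * cnj (c j) * range_kernel (zs ! j) (zs ! i)) in Im S = 0 \<and> Re S \<ge> 0"
    using h2_inner_self_nonneg[OF E] by (simp add: Let_def m_def)
qed

lemma range_kernel_reproducing:
  assumes "w \<in> ball 0 1"
  shows "onD (\<lambda>z. range_kernel z w) \<in> U ` H2 \<and>
    (\<forall>f\<in>U ` H2. range_inner f (onD (\<lambda>z. range_kernel z w)) = f w)"
proof -
  have "U (e w) \<in> H2"
    using H2_linearD(1)[OF U_linear e_H2[OF assms]] .
  then have "onD (\<lambda>z. range_kernel z w) = U (e w)"
    by (auto simp: range_kernel_def onD_def H2_outside_disc)
  then show ?thesis
    using e_H2[OF assms] U_eval[OF _ assms] by (auto simp: range_inner_U)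
qed

lemma Mz_range:
  "(\<forall>f\<in>U ` H2. Mz f \<in> U ` H2) \<and>
   (\<exists>C. \<forall>f\<in>U ` H2. sqrt (Re (range_inner (Mz f) (Mz f))) \<le> C * sqrt (Re (range_inner f f)))"
proof
  have Mz_U: "Mz (U a) = U (S a)" if "a \<in> H2" for a
    using U_S[OF that] by simp
  then show "\<forall>f\<in>U ` H2. Mz f \<in> U ` H2"
    using S_H2 by blast
  obtain C where C: "\<forall>f\<in>H2. h2_norm (S f) \<le> C * h2_norm f"
    using S_bounded by blast
  have "sqrt (Re (range_inner (Mz (U a)) (Mz (U a)))) \<le> C * sqrt (Re (range_inner (U a) (U a)))"
    if "a \<in> H2" for a
    using that C by (simp add: Mz_U norm_range_inner_U S_H2)
  then show "\<exists>C. \<forall>f\<in>U ` H2. sqrt (Re (range_inner (Mz f) (Mz f))) \<le> C * sqrt (Re (range_inner f f))"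
    by blast
qed

lemma range_kernel_holomorphic:
  assumes "w \<in> ball 0 1"
  shows "(\<lambda>z. range_kernel z w) holomorphic_on ball 0 1"
proof -
  have "U (e w) \<in> H2"
    using H2_linearD(1)[OF U_linear e_H2[OF assms]] .
  then show ?thesis
    by (simp add: range_kernel_def H2_def disc_fun_def)
qed

theorem analytic_hilbert_space_range: "analytic_hilbert_space (U ` H2) range_inner range_kernel"
  unfolding analytic_hilbert_space_def
proof (intro conjI)
  show "\<forall>w\<in>ball 0 1. (\<lambda>z. range_kernel z w) holomorphic_on ball 0 1"
    using range_kernel_holomorphic by blast
  show "\<forall>w\<in>ball 0 1. onD (\<lambda>z. range_kernel z w) \<in> U ` H2 \<and>
      (\<forall>f\<in>U ` H2. range_inner f (onD (\<lambda>z. range_kernel z w)) = f w)"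
    using range_kernel_reproducing by blast
qed (use range_subspace range_inner_product range_complete range_kernel_positive Mz_range
    in \<open>blast+\<close>)

theorem unitarily_equiv_Mz_range: "unitarily_equiv_Mz S (U ` H2) range_inner"
  unfolding unitarily_equiv_Mz_def
  by (intro exI[of _ U] conjI ballI allI)
     (simp_all add: H2_linearD[OF U_linear] range_inner_U U_S)

end

section \<open>The perturbed shift\<close>

lemma onD_mult_power: "onD (\<lambda>w. w ^ m * g w) = (\<lambda>w. w ^ m * onD g w)"
  by (auto simp: onD_def)

lemma mult_power_zpow: "w ^ m * zpow j w = zpow (m + j) w"
  by (simp add: zpow_def onD_def power_add)

locale n_perturbed_shift =
  fixes n :: nat and F S :: "(complex \<Rightarrow> complex) \<Rightarrow> complex \<Rightarrow> complex"
  assumes perturbation: "n_perturbation n F"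
    and S_def: "S = (\<lambda>f w. Mz f w + F f w)"
begin

lemma F_linear: "H2_linear F"
  using perturbation by (simp add: n_perturbation_def bounded_op_H2_linear)

lemma F_zpow: "m \<ge> n \<Longrightarrow> F (zpow m) = (\<lambda>w. 0)"
  using perturbation by (simp add: n_perturbation_def)

lemma F_mult_power:
  assumes "f \<in> H2"
  shows "\<exists>p. F (\<lambda>w. w ^ m * f w) = (\<lambda>w. w ^ (m + 1) * onD (poly p) w)"
proof -
  obtain p where "F (\<lambda>w. w ^ m * f w) = onD (\<lambda>w. w ^ (m + 1) * poly p w)"
    using perturbation assms unfolding n_perturbation_def by blast
  then show ?thesis
    unfolding onD_mult_power by blast
qed

lemma F_mult_power_eq_0:
  assumes "m \<ge> n" "f \<in> H2"
  shows "F (\<lambda>w. w ^ m * f w) = (\<lambda>w. 0)"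
proof (rule H2_eqI)
  show "F (\<lambda>w. w ^ m * f w) \<in> H2"
    by (intro H2_linearD(1)[OF F_linear] H2_mult_power(1) assms)
  have "tcoeff (F (\<lambda>w. w ^ m * f w)) k = 0" for k
  proof -
    obtain h where h: "h \<in> H2" "f = (\<lambda>w. (\<Sum>j<k. tcoeff f j * zpow j w) + w ^ k * h w)"
      using H2_taylor_split[OF assms(2)] by blast
    define P where "P w = (\<Sum>j<k. tcoeff f j * zpow (m + j) w)" for w
    have P: "P \<in> H2"
      unfolding P_def[abs_def] by (rule H2_sum(1)[OF finite_lessThan H2_zpow(1)])
    have "F P = (\<lambda>w. 0)"
      unfolding P_def[abs_def] H2_linear_sum[OF F_linear finite_lessThan H2_zpow(1)]
      using assms(1) by (simp add: F_zpow)
    moreover have "(\<lambda>w. w ^ m * f w) = (\<lambda>w. P w + w ^ (m + k) * h w)"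
      by (subst h(2))
        (simp add: P_def distrib_left sum_distrib_left mult_power_zpow[symmetric] power_add mult_ac)
    moreover obtain p where "F (\<lambda>w. w ^ (m + k) * h w) = (\<lambda>w. w ^ (m + k + 1) * onD (poly p) w)"
      using F_mult_power[OF h(1)] by blast
    ultimately have "F (\<lambda>w. w ^ m * f w) = (\<lambda>w. w ^ (m + k + 1) * onD (poly p) w)"
      using H2_linearD(2)[OF F_linear P H2_mult_power(1)[OF h(1)]] by simp
    then show ?thesis
      using H2_mult_power(2)[OF H2_poly(1), of "m + k + 1" p] by simp
  qed
  then show "tcoeff (F (\<lambda>w. w ^ m * f w)) = tcoeff (\<lambda>w. 0)"
    by (auto simp: H2_zero)
qed (rule H2_zero)

lemma S_linear: "H2_linear S"
  unfolding H2_linear_def S_def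
  using H2_linearD[OF F_linear] H2_add(1) H2_Mz by (auto simp: Mz_def algebra_simps)

lemma S_funpow_eq: "f \<in> H2 \<Longrightarrow> \<exists>p. (S ^^ m) f = (\<lambda>w. w ^ m * (f w + onD (poly p) w))"
proof (induction m)
  case 0
  then show ?case by (intro exI[of _ 0]) (simp add: onD_def)
next
  case (Suc m)
  then obtain p where p: "(S ^^ m) f = (\<lambda>w. w ^ m * (f w + onD (poly p) w))" by blast
  have "(\<lambda>w. f w + onD (poly p) w) \<in> H2"
    by (intro H2_add(1) Suc.prems H2_poly(1))
  then obtain q where "F (\<lambda>w. w ^ m * (f w + onD (poly p) w)) = (\<lambda>w. w ^ (m + 1) * onD (poly q) w)"
    using F_mult_power by blast
  then have "(S ^^ Suc m) f = (\<lambda>w. w ^ Suc m * (f w + onD (poly (p + q)) w))"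
    using p by (auto simp: S_def Mz_def onD_def algebra_simps)
  then show ?case by blast
qed

lemma S_funpow_mult_power:
  assumes "h \<in> H2"
  shows "(S ^^ k) (\<lambda>w. w ^ n * h w) = (\<lambda>w. w ^ (n + k) * h w)"
proof (induction k)
  case (Suc k)
  then show ?case
    using F_mult_power_eq_0[of "n + k", OF _ assms] by (simp add: S_def Mz_def mult.assoc)
qed simp

lemma S_funpow_inj: "inj_on (S ^^ k) H2"
proof (induction k)
  case (Suc k)
  obtain L where "\<forall>f\<in>H2. L (S f) = f"
    using perturbation by (auto simp: n_perturbation_def left_invertible_H2_def S_def)
  then have "inj_on S H2"
    by (metis inj_onI)
  then show ?case
    using Suc H2_linearD(1)[OF H2_linear_funpow[OF S_linear]]
    by (auto simp: inj_on_def)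
qed simp

definition U :: "(complex \<Rightarrow> complex) \<Rightarrow> complex \<Rightarrow> complex" where
  "U f = (SOME g. g \<in> H2 \<and> (S ^^ n) f = (\<lambda>w. w ^ n * g w))"

lemma U_spec:
  assumes "f \<in> H2"
  shows "U f \<in> H2" "(S ^^ n) f = (\<lambda>w. w ^ n * U f w)"
proof -
  obtain p where "(S ^^ n) f = (\<lambda>w. w ^ n * (f w + onD (poly p) w))"
    using S_funpow_eq[OF assms] by blast
  moreover have "(\<lambda>w. f w + onD (poly p) w) \<in> H2"
    by (intro H2_add(1) assms H2_poly(1))
  ultimately have "\<exists>g. g \<in> H2 \<and> (S ^^ n) f = (\<lambda>w. w ^ n * g w)"
    by blast
  from someI_ex[OF this] show "U f \<in> H2" "(S ^^ n) f = (\<lambda>w. w ^ n * U f w)"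
    unfolding U_def by auto
qed

lemma U_eqI:
  assumes "f \<in> H2" "g \<in> H2" "(S ^^ n) f = (\<lambda>w. w ^ n * g w)"
  shows "U f = g"
  using H2_mult_power_cancel[OF U_spec(1)[OF assms(1)] assms(2), of n] U_spec(2)[OF assms(1)]
    assms(3)
  by simp

lemma U_linear: "H2_linear U"
  unfolding H2_linear_def
proof (intro conjI ballI allI)
  fix f g assume "f \<in> H2" "g \<in> H2"
  then show "U (\<lambda>w. f w + g w) = (\<lambda>w. U f w + U g w)"
    by (intro U_eqI H2_add(1) U_spec(1))
       (simp_all add: H2_linearD(2)[OF H2_linear_funpow[OF S_linear]] U_spec(2) distrib_left)
next
  fix f c assume "f \<in> H2"
  then show "U (\<lambda>w. c * f w) = (\<lambda>w. c * U f w)"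
    by (intro U_eqI H2_scale(1) U_spec(1))
       (simp_all add: H2_linearD(3)[OF H2_linear_funpow[OF S_linear]] U_spec(2) mult_ac)
qed (rule U_spec(1))

lemma U_inj: "inj_on U H2"
  using S_funpow_inj[of n] by (auto simp: inj_on_def U_spec(2))

lemma U_S:
  assumes "f \<in> H2"
  shows "U (S f) = Mz (U f)"
proof (rule U_eqI)
  show "S f \<in> H2" "Mz (U f) \<in> H2"
    by (simp_all add: H2_linearD(1)[OF S_linear] H2_Mz U_spec(1) assms)
  have "(S ^^ n) (S f) = S ((S ^^ n) f)"
    by (simp add: funpow_swap1)
  also have "\<dots> = (\<lambda>w. w ^ (n + 1) * U f w)"
    using S_funpow_mult_power[OF U_spec(1)[OF assms], of 1] by (simp add: U_spec(2)[OF assms])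
  finally show "(S ^^ n) (S f) = (\<lambda>w. w ^ n * Mz (U f) w)"
    by (simp add: Mz_def mult_ac)
qed

lemma U_mult_power: "h \<in> H2 \<Longrightarrow> U (\<lambda>w. w ^ n * h w) = (\<lambda>w. w ^ n * h w)"
  by (intro U_eqI H2_mult_power(1)) (simp_all add: S_funpow_mult_power power_add mult.assoc)

definition U_correction :: "nat \<Rightarrow> complex \<Rightarrow> complex" where
  "U_correction j w = U (zpow j) w - zpow j w"

lemma U_eq_taylor:
  assumes "g \<in> H2"
  shows "U g w = g w + (\<Sum>j<n. tcoeff g j * U_correction j w)"
proof -
  obtain h where h: "h \<in> H2" "g = (\<lambda>w. (\<Sum>j<n. tcoeff g j * zpow j w) + w ^ n * h w)"
    using H2_taylor_split[OF assms] by blast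
  have "U g = U (\<lambda>w. (\<lambda>w. \<Sum>j<n. tcoeff g j * zpow j w) w + (\<lambda>w. w ^ n * h w) w)"
    using h(2) by simp
  also have "\<dots> = (\<lambda>w. (\<Sum>j<n. tcoeff g j * U (zpow j) w) + w ^ n * h w)"
    unfolding H2_linearD(2)[OF U_linear H2_sum(1)[OF finite_lessThan H2_zpow(1)]
        H2_mult_power(1)[OF h(1)]]
      H2_linear_sum[OF U_linear finite_lessThan H2_zpow(1)] U_mult_power[OF h(1)] ..
  finally show ?thesis
    by (subst (2) h(2)) (simp add: U_correction_def right_diff_distrib sum_subtractf)
qed

definition reproducing_coeff :: "complex \<Rightarrow> nat \<Rightarrow> complex" where
  "reproducing_coeff w k = cnj w ^ k + (if k < n then cnj (U_correction k w) else 0)"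

definition reproducing_vec :: "complex \<Rightarrow> complex \<Rightarrow> complex" where
  "reproducing_vec w = H2_of_coeffs (reproducing_coeff w)"

lemma reproducing_vec:
  assumes "w \<in> ball 0 1"
  shows "reproducing_vec w \<in> H2" "tcoeff (reproducing_vec w) = reproducing_coeff w"
proof -
  have "summable (\<lambda>k. (norm (cnj w ^ k))^2)"
    using assms by (intro summable_norm_sq_power) auto
  moreover have "summable (\<lambda>k. (norm (if k < n then cnj (U_correction k w) else 0))^2)"
    by (rule summable_finite[of "{..<n}"]) auto
  ultimately have "summable (\<lambda>k. (norm (reproducing_coeff w k))^2)"
    unfolding reproducing_coeff_def by (rule summable_norm_sq_add)
  from H2_of_coeffs[OF this]
  show "reproducing_vec w \<in> H2" "tcoeff (reproducing_vec w) = reproducing_coeff w"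
    unfolding reproducing_vec_def by simp_all
qed

lemma U_eval:
  assumes "g \<in> H2" "w \<in> ball 0 1"
  shows "h2_inner g (reproducing_vec w) = U g w"
proof -
  have "(\<lambda>k. tcoeff g k * w ^ k) sums g w"
    using disc_series_tcoeff[OF assms(1)] assms(2) by (auto simp: disc_series_def)
  moreover have "(\<lambda>k. if k < n then tcoeff g k * U_correction k w else 0)
      sums (\<Sum>k<n. tcoeff g k * U_correction k w)"
    using sums_If_finite_set[of "{..<n}" "\<lambda>k. tcoeff g k * U_correction k w"] by simp
  ultimately have "(\<lambda>k. tcoeff g k * w ^ k + (if k < n then tcoeff g k * U_correction k w else 0))
      sums U g w"
    unfolding U_eq_taylor[OF assms(1)] by (rule sums_add)
  moreover have "(\<lambda>k. tcoeff g k * cnj (tcoeff (reproducing_vec w) k)) =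
      (\<lambda>k. tcoeff g k * w ^ k + (if k < n then tcoeff g k * U_correction k w else 0))"
    by (auto simp: reproducing_vec(2)[OF assms(2)] reproducing_coeff_def distrib_left)
  ultimately show ?thesis
    by (simp add: h2_inner_def sums_iff)
qed

lemma S_bounded: "\<exists>C. \<forall>f\<in>H2. h2_norm (S f) \<le> C * h2_norm f"
proof -
  obtain C where C: "\<forall>f\<in>H2. h2_norm (F f) \<le> C * h2_norm f"
    using perturbation by (auto simp: n_perturbation_def bounded_op_H2_def)
  have "h2_norm (S f) \<le> (sqrt 2 * (1 + C)) * h2_norm f" if "f \<in> H2" for f
  proof -
    have "h2_norm (S f) \<le> sqrt 2 * (h2_norm (Mz f) + h2_norm (F f))"
      unfolding S_def using that by (intro h2_norm_add_le H2_Mz H2_linearD(1)[OF F_linear])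
    also have "\<dots> \<le> sqrt 2 * (h2_norm f + C * h2_norm f)"
      using C that by (simp add: h2_norm_Mz)
    finally show ?thesis by (simp add: algebra_simps)
  qed
  then show ?thesis by blast
qed

sublocale H2_transport U S reproducing_vec
  by unfold_locales
    (simp_all add: U_linear U_inj H2_linearD(1)[OF S_linear] S_bounded U_S reproducing_vec(1)
      U_eval)

end

theorem lemma2p3:
  fixes n :: nat and F :: "(complex \<Rightarrow> complex) \<Rightarrow> (complex \<Rightarrow> complex)"
    and S :: "(complex \<Rightarrow> complex) \<Rightarrow> (complex \<Rightarrow> complex)"
  assumes "n \<ge> 1"
    and "n_perturbation n F"
    and "S = (\<lambda>f. (\<lambda>w. Mz f w + F f w))"
  shows "(\<forall>m\<ge>n. \<forall>f\<in>H2. F (\<lambda>w. w ^ m * f w) = (\<lambda>w. 0))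
       \<and> (\<forall>f\<in>H2. \<forall>m\<ge>1. \<exists>p :: complex poly.
            (S ^^ m) f = (\<lambda>w. w ^ m * (f w + onD (poly p) w)))
       \<and> (\<exists>H ip k. analytic_hilbert_space H ip k \<and> unitarily_equiv_Mz S H ip)"
proof -
  interpret n_perturbed_shift n F S
    using assms(2,3) by unfold_locales
  show ?thesis
    using F_mult_power_eq_0 S_funpow_eq analytic_hilbert_space_range unitarily_equiv_Mz_range
    by blast
qed

end
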